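(* Under the hypotheses below, let $\epsilon>0$ and $$\hat\Gamma_{N_2}^{\epsilon}(\mathcal{K})=\{z\in\mathrm{Grid}(N_2):\sigma_{\inf}((\mathcal{K}-zI)\mathcal{P}_{N_2}^* )+1/N_2\le\epsilon\}.$$ Then $\hat\Gamma_{N_2}^{\epsilon}(\mathcal{K})\subset\mathrm{Sp}_{\mathrm{ap},\epsilon}(\mathcal{K})$ for every $N_2$, and $\hat\Gamma_{N_2}^{\epsilon}(\mathcal{K})\to\mathrm{Sp}_{\mathrm{ap},\epsilon}(\mathcal{K})$ in the Attouch–Wets sense as $N_2\to\infty$.
   Context: $\mathcal{H}$ is an RKHS on $\mathcal{X}$ with kernel $\mathfrak{K}$ and kernel functions $\mathfrak{K}_x$. For $F:\mathcal{X}\to\mathcal{X}$, the Koopman operator $\mathcal{K}g=g\circ F$ (domain $\{g\in\mathcal{H}:g\circ F\in\mathcal{H}\}$, a closed operator) is assumed densely defined; $\mathcal{K}^*$ is its adjoint. $\mathfrak{K}_1,\mathfrak{K}_2,\dots$ is a countable family of kernel functions whose span is a core of both $\mathcal{K}$ and $\mathcal{K}^*$; $V_n=\mathrm{span}\{\mathfrak{K}_1,\dots,\mathfrak{K}_n\}$, $\mathcal{P}_n$ the orthogonal projection onto $V_n$, $\mathcal{P}_n^*$ the inclusion $V_n\hookrightarrow\mathcal{H}$. Injection modulus $\sigma_{\inf}(T)=\inf\{\|Tg\|/\|g\|:0\ne g\in\mathcal{D}(T)\}$; $\mathrm{Sp}_{\mathrm{ap},\epsilon}(T)=\overline{\{z\in\mathbb{C}:\sigma_{\inf}(T-zI)<\epsilon\}}$.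 $\mathrm{Grid}(N)=\frac1N(\mathbb{Z}+i\mathbb{Z})\cap\{z:|z|\le N\}$. Attouch–Wets convergence of closed sets $C_n\to C$: if $C=\emptyset$, for every $m$, $C_n\cap B_m(0)=\emptyset$ for all large $n$; otherwise, for every $\delta>0$ and compact $K\subset\mathbb{C}$, for all large $n$, $C_n\cap K\subset C+B_\delta(0)$ and $C\cap K\subset C_n+B_\delta(0)$. *)

theory Defs
  imports "HOL-Analysis.Analysis"
begin

text \<open>A Hilbert space of functions X -> C is given by a carrier set H of functions
  and an inner product ip (linear in the first, conjugate-linear in the second argument).\<close>

definition hnorm :: "(('x \<Rightarrow> complex) \<Rightarrow> ('x \<Rightarrow> complex) \<Rightarrow> complex) \<Rightarrow> ('x \<Rightarrow> complex) \<Rightarrow> real" where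
  "hnorm ip g = sqrt (Re (ip g g))"

definition fdiff :: "('x \<Rightarrow> complex) \<Rightarrow> ('x \<Rightarrow> complex) \<Rightarrow> ('x \<Rightarrow> complex)" where
  "fdiff f g = (\<lambda>y. f y - g y)"

definition function_hilbert_space ::
  "('x \<Rightarrow> complex) set \<Rightarrow> (('x \<Rightarrow> complex) \<Rightarrow> ('x \<Rightarrow> complex) \<Rightarrow> complex) \<Rightarrow> bool" where
  "function_hilbert_space H ip \<longleftrightarrow>
     (\<lambda>y. 0) \<in> H \<and>
     (\<forall>f\<in>H. \<forall>g\<in>H. (\<lambda>y. f y + g y) \<in> H) \<and>
     (\<forall>c. \<forall>f\<in>H. (\<lambda>y. c * f y) \<in> H) \<and>
     (\<forall>f\<in>H. \<forall>g\<in>H. \<forall>h\<in>H. ip (\<lambda>y. f y + g y) h = ip f h + ip g h) \<and>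
     (\<forall>c. \<forall>f\<in>H. \<forall>h\<in>H. ip (\<lambda>y. c * f y) h = c * ip f h) \<and>
     (\<forall>f\<in>H. \<forall>g\<in>H. ip g f = cnj (ip f g)) \<and>
     (\<forall>f\<in>H. Im (ip f f) = 0 \<and> Re (ip f f) \<ge> 0) \<and>
     (\<forall>f\<in>H. ip f f = 0 \<longrightarrow> f = (\<lambda>y. 0)) \<and>
     (\<forall>s. (\<forall>n. s n \<in> H) \<and>
          (\<forall>e>0. \<exists>M. \<forall>m\<ge>M. \<forall>n\<ge>M. hnorm ip (fdiff (s m) (s n)) < e)
          \<longrightarrow> (\<exists>g\<in>H. (\<lambda>n. hnorm ip (fdiff (s n) g)) \<longlonglongrightarrow> 0))"

text \<open>RKHS with kernel functions kern x (so the kernel is K(y,x) = kern x y):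
  reproducing property g x = <g, kern x>.\<close>
definition is_RKHS ::
  "('x \<Rightarrow> complex) set \<Rightarrow> (('x \<Rightarrow> complex) \<Rightarrow> ('x \<Rightarrow> complex) \<Rightarrow> complex) \<Rightarrow> ('x \<Rightarrow> 'x \<Rightarrow> complex) \<Rightarrow> bool" where
  "is_RKHS H ip kern \<longleftrightarrow> function_hilbert_space H ip \<and>
     (\<forall>x. kern x \<in> H) \<and> (\<forall>g\<in>H. \<forall>x. g x = ip g (kern x))"

text \<open>Koopman operator K g = g o F with its maximal domain.\<close>
definition koop_dom :: "('x \<Rightarrow> complex) set \<Rightarrow> ('x \<Rightarrow> 'x) \<Rightarrow> ('x \<Rightarrow> complex) set" where
  "koop_dom H F = {g\<in>H. g \<circ> F \<in> H}"

definition koop_adj_dom ::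
  "('x \<Rightarrow> complex) set \<Rightarrow> (('x \<Rightarrow> complex) \<Rightarrow> ('x \<Rightarrow> complex) \<Rightarrow> complex) \<Rightarrow> ('x \<Rightarrow> 'x) \<Rightarrow> ('x \<Rightarrow> complex) set" where
  "koop_adj_dom H ip F = {h\<in>H. \<exists>w\<in>H. \<forall>g\<in>koop_dom H F. ip (g \<circ> F) h = ip g w}"

definition koop_adj ::
  "('x \<Rightarrow> complex) set \<Rightarrow> (('x \<Rightarrow> complex) \<Rightarrow> ('x \<Rightarrow> complex) \<Rightarrow> complex) \<Rightarrow> ('x \<Rightarrow> 'x) \<Rightarrow> ('x \<Rightarrow> complex) \<Rightarrow> ('x \<Rightarrow> complex)" where
  "koop_adj H ip F h = (SOME w. w \<in> H \<and> (\<forall>g\<in>koop_dom H F. ip (g \<circ> F) h = ip g w))"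

definition densely_defined ::
  "('x \<Rightarrow> complex) set \<Rightarrow> (('x \<Rightarrow> complex) \<Rightarrow> ('x \<Rightarrow> complex) \<Rightarrow> complex) \<Rightarrow> ('x \<Rightarrow> complex) set \<Rightarrow> bool" where
  "densely_defined H ip D \<longleftrightarrow> D \<subseteq> H \<and> (\<forall>g\<in>H. \<forall>e>0. \<exists>d\<in>D. hnorm ip (fdiff g d) < e)"

definition is_core ::
  "(('x \<Rightarrow> complex) \<Rightarrow> ('x \<Rightarrow> complex) \<Rightarrow> complex) \<Rightarrow> ('x \<Rightarrow> complex) set \<Rightarrow>
   (('x \<Rightarrow> complex) \<Rightarrow> ('x \<Rightarrow> complex)) \<Rightarrow> ('x \<Rightarrow> complex) set \<Rightarrow> bool" where
  "is_core ip D T S \<longleftrightarrow> S \<subseteq> D \<and>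
     (\<forall>g\<in>D. \<exists>s. (\<forall>n. s n \<in> S) \<and> (\<lambda>n. hnorm ip (fdiff (s n) g)) \<longlonglongrightarrow> 0 \<and>
                  (\<lambda>n. hnorm ip (fdiff (T (s n)) (T g))) \<longlonglongrightarrow> 0)"

definition Vspan :: "('x \<Rightarrow> 'x \<Rightarrow> complex) \<Rightarrow> (nat \<Rightarrow> 'x) \<Rightarrow> nat \<Rightarrow> ('x \<Rightarrow> complex) set" where
  "Vspan kern xs n = {(\<lambda>y. \<Sum>j\<in>{1..n}. c j * kern (xs j) y) | c. True}"

definition Vspan_all :: "('x \<Rightarrow> 'x \<Rightarrow> complex) \<Rightarrow> (nat \<Rightarrow> 'x) \<Rightarrow> ('x \<Rightarrow> complex) set" where
  "Vspan_all kern xs = (\<Union>n. Vspan kern xs n)"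

text \<open>Injection modulus of T restricted to a domain D (inf of empty set = +infinity).\<close>
definition sigma_inf ::
  "(('x \<Rightarrow> complex) \<Rightarrow> ('x \<Rightarrow> complex) \<Rightarrow> complex) \<Rightarrow> ('x \<Rightarrow> complex) set \<Rightarrow>
   (('x \<Rightarrow> complex) \<Rightarrow> ('x \<Rightarrow> complex)) \<Rightarrow> ereal" where
  "sigma_inf ip D T = Inf {ereal (hnorm ip (T g) / hnorm ip g) | g. g \<in> D \<and> g \<noteq> (\<lambda>y. 0)}"

definition koop_shift :: "('x \<Rightarrow> 'x) \<Rightarrow> complex \<Rightarrow> ('x \<Rightarrow> complex) \<Rightarrow> ('x \<Rightarrow> complex)" where
  "koop_shift F z g = (\<lambda>y. g (F y) - z * g y)"

definition Sp_ap_eps ::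
  "('x \<Rightarrow> complex) set \<Rightarrow> (('x \<Rightarrow> complex) \<Rightarrow> ('x \<Rightarrow> complex) \<Rightarrow> complex) \<Rightarrow> ('x \<Rightarrow> 'x) \<Rightarrow> real \<Rightarrow> complex set" where
  "Sp_ap_eps H ip F \<epsilon> = closure {z. sigma_inf ip (koop_dom H F) (koop_shift F z) < ereal \<epsilon>}"

definition Grid :: "nat \<Rightarrow> complex set" where
  "Grid N = {z. \<exists>a b :: int. z = Complex (of_int a / of_nat N) (of_int b / of_nat N) \<and> cmod z \<le> of_nat N}"

definition Gamma_hat ::
  "(('x \<Rightarrow> complex) \<Rightarrow> ('x \<Rightarrow> complex) \<Rightarrow> complex) \<Rightarrow> ('x \<Rightarrow> 'x \<Rightarrow> complex) \<Rightarrow> (nat \<Rightarrow> 'x) \<Rightarrow>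
   ('x \<Rightarrow> 'x) \<Rightarrow> real \<Rightarrow> nat \<Rightarrow> complex set" where
  "Gamma_hat ip kern xs F \<epsilon> N =
     {z \<in> Grid N. sigma_inf ip (Vspan kern xs N) (koop_shift F z) + ereal (1 / of_nat N) \<le> ereal \<epsilon>}"

definition attouch_wets :: "(nat \<Rightarrow> complex set) \<Rightarrow> complex set \<Rightarrow> bool" where
  "attouch_wets Cs C \<longleftrightarrow>
     (if C = {} then (\<forall>m::nat. eventually (\<lambda>n. Cs n \<inter> ball 0 (real m) = {}) sequentially)
      else (\<forall>\<delta>>0. \<forall>K. compact K \<longrightarrow>
              eventually (\<lambda>n. Cs n \<inter> K \<subseteq> (\<Union>c\<in>C. ball c \<delta>) \<and>
                              C \<inter> K \<subseteq> (\<Union>c\<in>Cs n. ball c \<delta>)) sequentially))"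

end

theory Submission
  imports Defs
begin

text \<open>Restricting the infimum to \<open>V\<^sub>N \<subseteq> \<D>(\<K>)\<close> can only increase the injection modulus, so
  every point \<open>z\<close> of \<open>\<Gamma>\<^sub>N\<close> has \<open>\<sigma>\<^sub>i\<^sub>n\<^sub>f(\<K> - z) < \<epsilon>\<close>. Conversely, because the span of the kernel
  functions is a core of \<open>\<K>\<close>, the infimum defining \<open>\<sigma>\<^sub>i\<^sub>n\<^sub>f(\<K> - w)\<close> may be taken over that span alone.
  So if \<open>\<sigma>\<^sub>i\<^sub>n\<^sub>f(\<K> - w) < \<epsilon>\<close>, some \<open>s \<in> V\<^sub>M\<close> has \<open>\<parallel>(\<K> - w)s\<parallel> < \<epsilon>\<parallel>s\<parallel>\<close>; since moving \<open>w\<close> by \<open>d\<close>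
  changes \<open>\<parallel>(\<K> - w)s\<parallel>/\<parallel>s\<parallel>\<close> by at most \<open>d\<close>, this one \<open>s\<close> shows that the grid point nearest to \<open>w\<close>
  lies in \<open>\<Gamma>\<^sub>N\<close> for all large \<open>N\<close>. Compactness turns this pointwise approximation of a dense subset
  of \<open>Sp\<^sub>a\<^sub>p\<^sub>,\<^sub>\<epsilon>\<close> into Attouch-Wets convergence.\<close>

lemma nonneg_quadratic_discriminant:
  fixes a b c :: real
  assumes "\<And>t. 0 \<le> a + 2*t*b + t^2*c" and "c \<ge> 0"
  shows "b^2 \<le> a*c"
proof (cases "c > 0")
  case True
  have "0 \<le> a + 2*(-b/c)*b + (-b/c)^2*c"
    by (rule assms(1))
  also have "\<dots> = a - b^2/c"
    using True by (simp add: field_simps power2_eq_square)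
  finally show ?thesis
    using True by (simp add: field_simps)
next
  case False
  then have "c = 0"
    using assms(2) by simp
  show ?thesis
  proof (rule ccontr)
    assume "\<not> b^2 \<le> a*c"
    then have "b \<noteq> 0"
      using \<open>c = 0\<close> by simp
    have "0 \<le> a + 2*(-(a+1)/(2*b))*b + (-(a+1)/(2*b))^2*c"
      by (rule assms(1))
    also have "\<dots> = -1"
      using \<open>b \<noteq> 0\<close> \<open>c = 0\<close> by (simp add: field_simps)
    finally show False
      by simp
  qed
qed

lemma tendsto_of_abs_diff_le:
  fixes a :: "nat \<Rightarrow> real"
  assumes "\<And>n. \<bar>a n - l\<bar> \<le> b n" and "b \<longlonglongrightarrow> 0"
  shows "a \<longlonglongrightarrow> l"
proof -
  have "(\<lambda>n. a n - l) \<longlonglongrightarrow> 0"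
    by (rule Lim_null_comparison[OF _ assms(2)]) (use assms(1) in simp)
  then show ?thesis by (rule LIM_zero_cancel)
qed

lemma floor_scaled_approx:
  fixes N x :: real
  assumes "N > 0"
  shows "\<bar>of_int \<lfloor>N * x\<rfloor> / N - x\<bar> \<le> 1 / N"
proof -
  have "of_int \<lfloor>N * x\<rfloor> / N - x = (of_int \<lfloor>N * x\<rfloor> - N * x) / N"
    using assms by (simp add: field_simps)
  moreover have "\<bar>of_int \<lfloor>N * x\<rfloor> - N * x\<bar> \<le> 1"
    by linarith
  ultimately show ?thesis
    using assms by (simp add: divide_right_mono)
qed

lemma Grid_approx:
  assumes "N \<ge> 1" and "cmod w + 2 \<le> real N"
  shows "\<exists>g\<in>Grid N. cmod (g - w) \<le> 2 / real N"
proof -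
  define g where
    "g = Complex (of_int \<lfloor>real N * Re w\<rfloor> / real N) (of_int \<lfloor>real N * Im w\<rfloor> / real N)"
  have N: "real N > 0"
    using assms(1) by simp
  have "cmod (g - w) \<le> \<bar>Re (g - w)\<bar> + \<bar>Im (g - w)\<bar>"
    by (rule cmod_le)
  also have "\<dots> \<le> 1 / real N + 1 / real N"
    unfolding g_def using floor_scaled_approx[OF N, of "Re w"] floor_scaled_approx[OF N, of "Im w"]
    by simp
  finally have close: "cmod (g - w) \<le> 2 / real N"
    by simp
  have "cmod g \<le> cmod w + cmod (g - w)"
    using norm_triangle_ineq[of w "g - w"] by simp
  also have "\<dots> \<le> real N"
  proof -
    have "2 / real N \<le> 2"
      using assms(1) by (simp add: divide_le_eq)
    then show ?thesis
      using close assms(2) by linarith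
  qed
  finally have "g \<in> Grid N"
    unfolding Grid_def g_def by blast
  with close show ?thesis
    by blast
qed

lemma ereal_less_if_add_pos_le:
  fixes x :: ereal
  assumes "x + ereal d \<le> ereal e" and "d > 0"
  shows "x < ereal e"
  using assms by (cases x) auto

lemma eventually_compact_subset_Union_balls:
  fixes \<Gamma> :: "'i \<Rightarrow> 'a::metric_space set"
  assumes K: "compact K" "K \<subseteq> closure U" and "\<delta> > 0"
    and approx: "\<And>w e. w \<in> U \<Longrightarrow> e > 0 \<Longrightarrow> eventually (\<lambda>n. \<exists>g\<in>\<Gamma> n. dist w g < e) F"
  shows "eventually (\<lambda>n. K \<subseteq> (\<Union>c\<in>\<Gamma> n. ball c \<delta>)) F"
proof -
  have "K \<subseteq> (\<Union>w\<in>U. ball w (\<delta>/2))"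
  proof
    fix z assume "z \<in> K"
    then have "z \<in> closure U"
      using K(2) by blast
    then obtain w where "w \<in> U" "dist w z < \<delta>/2"
      using \<open>\<delta> > 0\<close> unfolding closure_approachable by (meson half_gt_zero)
    then show "z \<in> (\<Union>w\<in>U. ball w (\<delta>/2))"
      by auto
  qed
  then obtain W where "W \<subseteq> U" "finite W" and W: "K \<subseteq> (\<Union>w\<in>W. ball w (\<delta>/2))"
    by (rule compactE_image[OF K(1), rotated]) auto
  have "eventually (\<lambda>n. \<forall>w\<in>W. \<exists>g\<in>\<Gamma> n. dist w g < \<delta>/2) F"
    using \<open>finite W\<close> \<open>W \<subseteq> U\<close> \<open>\<delta> > 0\<close> by (intro eventually_ball_finite ballI approx) auto
  then show ?thesis
  proof (rule eventually_mono)
    fix n assume near: "\<forall>w\<in>W. \<exists>g\<in>\<Gamma> n. dist w g < \<delta>/2"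
    show "K \<subseteq> (\<Union>c\<in>\<Gamma> n. ball c \<delta>)"
    proof
      fix z assume "z \<in> K"
      then obtain w where "w \<in> W" "dist z w < \<delta>/2"
        using W by (auto simp: dist_commute)
      moreover obtain g where "g \<in> \<Gamma> n" "dist g w < \<delta>/2"
        using near \<open>w \<in> W\<close> by (auto simp: dist_commute)
      ultimately have "z \<in> ball g \<delta>"
        using dist_triangle_half_l[of g w \<delta> z] by simp
      with \<open>g \<in> \<Gamma> n\<close> show "z \<in> (\<Union>c\<in>\<Gamma> n. ball c \<delta>)"
        by blast
    qed
  qed
qed

lemma attouch_wets_closure:
  fixes \<Gamma> :: "nat \<Rightarrow> complex set"
  assumes sub: "eventually (\<lambda>n. \<Gamma> n \<subseteq> closure U) sequentially"
    and approx: "\<And>w e. w \<in> U \<Longrightarrow> e > 0 \<Longrightarrow> eventually (\<lambda>n. \<exists>g\<in>\<Gamma> n. dist w g < e) sequentially"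
  shows "attouch_wets \<Gamma> (closure U)"
proof (cases "closure U = {}")
  case True
  then show ?thesis
    unfolding attouch_wets_def using sub by (auto elim: eventually_mono)
next
  case False
  have "eventually (\<lambda>n. \<Gamma> n \<inter> K \<subseteq> (\<Union>c\<in>closure U. ball c \<delta>)
      \<and> closure U \<inter> K \<subseteq> (\<Union>c\<in>\<Gamma> n. ball c \<delta>)) sequentially"
    if "\<delta> > 0" "compact K" for \<delta> K
  proof (rule eventually_conj)
    show "eventually (\<lambda>n. \<Gamma> n \<inter> K \<subseteq> (\<Union>c\<in>closure U. ball c \<delta>)) sequentially"
      using sub by (rule eventually_mono) (use \<open>\<delta> > 0\<close> in force)
    show "eventually (\<lambda>n. closure U \<inter> K \<subseteq> (\<Union>c\<in>\<Gamma> n. ball c \<delta>)) sequentially"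
      using closed_Int_compact[OF closed_closure \<open>compact K\<close>] \<open>\<delta> > 0\<close> approx
      by (intro eventually_compact_subset_Union_balls) auto
  qed
  then show ?thesis
    unfolding attouch_wets_def using False by simp
qed

lemma sigma_inf_le:
  "g \<in> D \<Longrightarrow> g \<noteq> (\<lambda>y. 0) \<Longrightarrow> sigma_inf ip D T \<le> ereal (hnorm ip (T g) / hnorm ip g)"
  unfolding sigma_inf_def by (rule Inf_lower) blast

lemma sigma_inf_antimono: "D \<subseteq> D' \<Longrightarrow> sigma_inf ip D' T \<le> sigma_inf ip D T"
  unfolding sigma_inf_def by (rule Inf_superset_mono) blast

lemma Vspan_mono:
  assumes "M \<le> N"
  shows "Vspan kern xs M \<subseteq> Vspan kern xs N"
proof
  fix s assume "s \<in> Vspan kern xs M"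
  then obtain c where s: "s = (\<lambda>y. \<Sum>j\<in>{1..M}. c j * kern (xs j) y)"
    unfolding Vspan_def by blast
  define c' where "c' j = (if j \<le> M then c j else 0)" for j
  have "(\<Sum>j\<in>{1..N}. c' j * kern (xs j) y) = (\<Sum>j\<in>{1..M}. c j * kern (xs j) y)" for y
    by (rule sum.mono_neutral_cong_right) (use assms in \<open>auto simp: c'_def\<close>)
  then have "s = (\<lambda>y. \<Sum>j\<in>{1..N}. c' j * kern (xs j) y)"
    unfolding s by simp
  then show "s \<in> Vspan kern xs N"
    unfolding Vspan_def by blast
qed

lemma Gamma_hat_subset_Sp_ap_eps:
  assumes "Vspan_all kern xs \<subseteq> koop_dom H F" and "N \<ge> 1"
  shows "Gamma_hat ip kern xs F \<epsilon> N \<subseteq> Sp_ap_eps H ip F \<epsilon>"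
proof
  fix z assume "z \<in> Gamma_hat ip kern xs F \<epsilon> N"
  then have "sigma_inf ip (Vspan kern xs N) (koop_shift F z) < ereal \<epsilon>"
    unfolding Gamma_hat_def using assms(2) by (auto intro: ereal_less_if_add_pos_le)
  moreover have "sigma_inf ip (koop_dom H F) (koop_shift F z) \<le> sigma_inf ip (Vspan kern xs N) (koop_shift F z)"
    by (rule sigma_inf_antimono) (use assms(1) in \<open>auto simp: Vspan_all_def\<close>)
  ultimately show "z \<in> Sp_ap_eps H ip F \<epsilon>"
    unfolding Sp_ap_eps_def using closure_subset by fastforce
qed

context
  fixes H :: "('x \<Rightarrow> complex) set" and ip
  assumes hs: "function_hilbert_space H ip"
begin

lemma H_zero_mem: "(\<lambda>y. 0) \<in> H"
  using hs unfolding function_hilbert_space_def by blast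

lemma H_add_mem: "f \<in> H \<Longrightarrow> g \<in> H \<Longrightarrow> (\<lambda>y. f y + g y) \<in> H"
  using hs unfolding function_hilbert_space_def by blast

lemma H_scale_mem: "f \<in> H \<Longrightarrow> (\<lambda>y. c * f y) \<in> H"
  using hs unfolding function_hilbert_space_def by blast

lemma ip_add_left: "f \<in> H \<Longrightarrow> g \<in> H \<Longrightarrow> h \<in> H \<Longrightarrow> ip (\<lambda>y. f y + g y) h = ip f h + ip g h"
  using hs unfolding function_hilbert_space_def by blast

lemma ip_scale_left: "f \<in> H \<Longrightarrow> h \<in> H \<Longrightarrow> ip (\<lambda>y. c * f y) h = c * ip f h"
  using hs unfolding function_hilbert_space_def by blast

lemma ip_commute_cnj: "f \<in> H \<Longrightarrow> g \<in> H \<Longrightarrow> ip g f = cnj (ip f g)"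
  using hs unfolding function_hilbert_space_def by blast

lemma ip_self_nonneg: "f \<in> H \<Longrightarrow> Im (ip f f) = 0 \<and> Re (ip f f) \<ge> 0"
  using hs unfolding function_hilbert_space_def by blast

lemma ip_self_eq_0: "f \<in> H \<Longrightarrow> ip f f = 0 \<Longrightarrow> f = (\<lambda>y. 0)"
  using hs unfolding function_hilbert_space_def by blast

lemma ip_add_right:
  assumes f: "f \<in> H" and g: "g \<in> H" and h: "h \<in> H"
  shows "ip h (\<lambda>y. f y + g y) = ip h f + ip h g"
proof -
  have "ip h (\<lambda>y. f y + g y) = cnj (ip (\<lambda>y. f y + g y) h)"
    by (rule ip_commute_cnj[OF H_add_mem[OF f g] h])
  also have "\<dots> = ip h f + ip h g"
    using ip_add_left[OF f g h] ip_commute_cnj[OF f h] ip_commute_cnj[OF g h] by simp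
  finally show ?thesis .
qed

lemma ip_scale_right:
  assumes f: "f \<in> H" and h: "h \<in> H"
  shows "ip h (\<lambda>y. c * f y) = cnj c * ip h f"
proof -
  have "ip h (\<lambda>y. c * f y) = cnj (ip (\<lambda>y. c * f y) h)"
    by (rule ip_commute_cnj[OF H_scale_mem[OF f] h])
  also have "\<dots> = cnj c * ip h f"
    using ip_scale_left[OF f h] ip_commute_cnj[OF f h] by simp
  finally show ?thesis .
qed

lemma Re_ip_commute: "f \<in> H \<Longrightarrow> g \<in> H \<Longrightarrow> Re (ip g f) = Re (ip f g)"
  using ip_commute_cnj[of f g] by simp

lemma hnorm_nonneg: "f \<in> H \<Longrightarrow> hnorm ip f \<ge> 0"
  unfolding hnorm_def using ip_self_nonneg by simp

lemma hnorm_power2: "f \<in> H \<Longrightarrow> (hnorm ip f)^2 = Re (ip f f)"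
  unfolding hnorm_def using ip_self_nonneg by simp

lemma Re_ip_le_hnorm_mult:
  assumes f: "f \<in> H" and g: "g \<in> H"
  shows "Re (ip f g) \<le> hnorm ip f * hnorm ip g"
proof -
  have "0 \<le> Re (ip f f) + 2*t*Re (ip f g) + t^2*Re (ip g g)" for t :: real
  proof -
    define tg where "tg = (\<lambda>y. complex_of_real t * g y)"
    have tg: "tg \<in> H" unfolding tg_def using g by (rule H_scale_mem)
    have u: "(\<lambda>y. f y + tg y) \<in> H" using f tg by (rule H_add_mem)
    have "ip (\<lambda>y. f y + tg y) (\<lambda>y. f y + tg y) = ip f f + ip f tg + (ip tg f + ip tg tg)"
      using f tg u by (simp add: ip_add_left ip_add_right)
    also have "\<dots> = ip f f + t * ip f g + t * ip g f + t * t * ip g g"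
      unfolding tg_def using f g tg[unfolded tg_def] by (simp add: ip_scale_left ip_scale_right)
    finally have "Re (ip (\<lambda>y. f y + tg y) (\<lambda>y. f y + tg y))
        = Re (ip f f) + 2*t*Re (ip f g) + t^2*Re (ip g g)"
      using Re_ip_commute[OF f g] by (simp add: power2_eq_square)
    then show ?thesis using ip_self_nonneg[OF u] by simp
  qed
  then have "(Re (ip f g))^2 \<le> Re (ip f f) * Re (ip g g)"
    by (rule nonneg_quadratic_discriminant) (use ip_self_nonneg[OF g] in simp)
  then have "(Re (ip f g))^2 \<le> (hnorm ip f * hnorm ip g)^2"
    using f g by (simp add: hnorm_power2 power_mult_distrib)
  then show ?thesis
    by (rule power2_le_imp_le) (use hnorm_nonneg[OF f] hnorm_nonneg[OF g] in simp)
qed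

lemma hnorm_add_le:
  assumes f: "f \<in> H" and g: "g \<in> H"
  shows "hnorm ip (\<lambda>y. f y + g y) \<le> hnorm ip f + hnorm ip g"
proof -
  have "(hnorm ip (\<lambda>y. f y + g y))^2 = Re (ip f f) + 2 * Re (ip f g) + Re (ip g g)"
    using f g H_add_mem Re_ip_commute[OF f g] by (simp add: hnorm_power2 ip_add_left ip_add_right)
  also have "\<dots> \<le> (hnorm ip f + hnorm ip g)^2"
    using Re_ip_le_hnorm_mult[OF f g] f g by (simp add: hnorm_power2 power2_sum)
  finally show ?thesis
    by (rule power2_le_imp_le) (use f g hnorm_nonneg in simp)
qed

lemma hnorm_scale:
  assumes f: "f \<in> H"
  shows "hnorm ip (\<lambda>y. c * f y) = cmod c * hnorm ip f"
proof -
  have "ip (\<lambda>y. c * f y) (\<lambda>y. c * f y) = (c * cnj c) * ip f f"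
    using f H_scale_mem by (simp add: ip_scale_left ip_scale_right)
  also have "c * cnj c = complex_of_real ((cmod c)^2)"
    by (rule complex_norm_square[symmetric])
  finally show ?thesis
    unfolding hnorm_def by (simp add: real_sqrt_mult)
qed

lemma hnorm_zero: "hnorm ip (\<lambda>y. 0) = 0"
  using hnorm_scale[OF H_zero_mem, of 0] by simp

lemma hnorm_pos:
  assumes "f \<in> H" and "f \<noteq> (\<lambda>y. 0)"
  shows "hnorm ip f > 0"
proof -
  have "ip f f \<noteq> 0" using assms ip_self_eq_0 by blast
  then have "Re (ip f f) > 0" using ip_self_nonneg[OF assms(1)] complex_eq_iff by force
  then show ?thesis unfolding hnorm_def by simp
qed

lemma H_fdiff_mem: "f \<in> H \<Longrightarrow> g \<in> H \<Longrightarrow> fdiff f g \<in> H"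
  unfolding fdiff_def using H_add_mem H_scale_mem[of g "-1"] by fastforce

lemma abs_hnorm_diff_le:
  assumes f: "f \<in> H" and g: "g \<in> H"
  shows "\<bar>hnorm ip f - hnorm ip g\<bar> \<le> hnorm ip (fdiff f g)"
proof -
  have "hnorm ip f \<le> hnorm ip g + hnorm ip (fdiff f g)"
    using hnorm_add_le[OF g H_fdiff_mem[OF f g]] by (simp add: fdiff_def)
  moreover have "hnorm ip (fdiff g f) = hnorm ip (fdiff f g)"
    using hnorm_scale[OF H_fdiff_mem[OF f g], of "-1"] by (simp add: fdiff_def)
  then have "hnorm ip g \<le> hnorm ip f + hnorm ip (fdiff f g)"
    using hnorm_add_le[OF f H_fdiff_mem[OF g f]] by (simp add: fdiff_def)
  ultimately show ?thesis by linarith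
qed

lemma hnorm_tendsto:
  assumes "\<And>n. s n \<in> H" and "h \<in> H" and "(\<lambda>n. hnorm ip (fdiff (s n) h)) \<longlonglongrightarrow> 0"
  shows "(\<lambda>n. hnorm ip (s n)) \<longlonglongrightarrow> hnorm ip h"
  using tendsto_of_abs_diff_le[OF abs_hnorm_diff_le[OF assms(1,2)] assms(3)] .

lemma koop_shift_mem:
  assumes "s \<in> koop_dom H F"
  shows "koop_shift F w s \<in> H"
proof -
  have "s \<in> H" "s \<circ> F \<in> H"
    using assms unfolding koop_dom_def by auto
  then have "(\<lambda>y. (s \<circ> F) y + (-w) * s y) \<in> H"
    by (intro H_add_mem H_scale_mem)
  then show ?thesis
    unfolding koop_shift_def by simp
qed

lemma hnorm_koop_shift_le:
  assumes s: "s \<in> koop_dom H F"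
  shows "hnorm ip (koop_shift F z s) \<le> hnorm ip (koop_shift F w s) + cmod (z - w) * hnorm ip s"
proof -
  have sH: "s \<in> H"
    using s unfolding koop_dom_def by auto
  have shift: "koop_shift F z s = (\<lambda>y. koop_shift F w s y + (w - z) * s y)"
    unfolding koop_shift_def by (auto simp: algebra_simps)
  have "hnorm ip (koop_shift F z s) \<le> hnorm ip (koop_shift F w s) + hnorm ip (\<lambda>y. (w - z) * s y)"
    unfolding shift by (rule hnorm_add_le[OF koop_shift_mem[OF s] H_scale_mem[OF sH]])
  also have "hnorm ip (\<lambda>y. (w - z) * s y) = cmod (z - w) * hnorm ip s"
    using hnorm_scale[OF sH] by (simp add: norm_minus_commute)
  finally show ?thesis .
qed

lemma hnorm_koop_shift_tendsto:
  assumes s: "\<And>n. s n \<in> koop_dom H F" and h: "h \<in> koop_dom H F"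
    and to_h: "(\<lambda>n. hnorm ip (fdiff (s n) h)) \<longlonglongrightarrow> 0"
    and to_Kh: "(\<lambda>n. hnorm ip (fdiff (s n \<circ> F) (h \<circ> F))) \<longlonglongrightarrow> 0"
  shows "(\<lambda>n. hnorm ip (koop_shift F w (s n))) \<longlonglongrightarrow> hnorm ip (koop_shift F w h)"
proof (rule tendsto_of_abs_diff_le)
  fix n
  have sn: "s n \<in> H" "s n \<circ> F \<in> H" and hh: "h \<in> H" "h \<circ> F \<in> H"
    using s[of n] h unfolding koop_dom_def by auto
  have diff: "fdiff (koop_shift F w (s n)) (koop_shift F w h) =
      (\<lambda>y. fdiff (s n \<circ> F) (h \<circ> F) y + (-w) * fdiff (s n) h y)"
    unfolding fdiff_def koop_shift_def by (auto simp: algebra_simps)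
  have "\<bar>hnorm ip (koop_shift F w (s n)) - hnorm ip (koop_shift F w h)\<bar>
      \<le> hnorm ip (fdiff (koop_shift F w (s n)) (koop_shift F w h))"
    by (rule abs_hnorm_diff_le[OF koop_shift_mem[OF s] koop_shift_mem[OF h]])
  also have "\<dots> \<le> hnorm ip (fdiff (s n \<circ> F) (h \<circ> F)) + hnorm ip (\<lambda>y. (-w) * fdiff (s n) h y)"
    unfolding diff
    by (rule hnorm_add_le[OF H_fdiff_mem[OF sn(2) hh(2)] H_scale_mem[OF H_fdiff_mem[OF sn(1) hh(1)]]])
  also have "hnorm ip (\<lambda>y. (-w) * fdiff (s n) h y) = cmod w * hnorm ip (fdiff (s n) h)"
    using hnorm_scale[OF H_fdiff_mem[OF sn(1) hh(1)], of "-w"] by (simp only: norm_minus_cancel)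
  finally show "\<bar>hnorm ip (koop_shift F w (s n)) - hnorm ip (koop_shift F w h)\<bar>
      \<le> hnorm ip (fdiff (s n \<circ> F) (h \<circ> F)) + cmod w * hnorm ip (fdiff (s n) h)" .
next
  show "(\<lambda>n. hnorm ip (fdiff (s n \<circ> F) (h \<circ> F)) + cmod w * hnorm ip (fdiff (s n) h)) \<longlonglongrightarrow> 0"
    using tendsto_add[OF to_Kh tendsto_mult[OF tendsto_const to_h]] by simp
qed

lemma sigma_inf_koop_shift_core:
  assumes core: "is_core ip (koop_dom H F) (\<lambda>g. g \<circ> F) S"
  shows "sigma_inf ip S (koop_shift F w) = sigma_inf ip (koop_dom H F) (koop_shift F w)"
proof (rule antisym)
  show "sigma_inf ip S (koop_shift F w) \<le> sigma_inf ip (koop_dom H F) (koop_shift F w)"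
    unfolding sigma_inf_def[of ip "koop_dom H F"]
  proof (rule Inf_greatest, clarify)
    fix h assume h: "h \<in> koop_dom H F" "h \<noteq> (\<lambda>y. 0)"
    obtain s where s: "\<And>n. s n \<in> S"
      and to_h: "(\<lambda>n. hnorm ip (fdiff (s n) h)) \<longlonglongrightarrow> 0"
      and to_Kh: "(\<lambda>n. hnorm ip (fdiff (s n \<circ> F) (h \<circ> F))) \<longlonglongrightarrow> 0"
      using core h(1) unfolding is_core_def by blast
    have sD: "s n \<in> koop_dom H F" for n
      using core s unfolding is_core_def by blast
    have hH: "h \<in> H" and sH: "\<And>n. s n \<in> H"
      using h(1) sD unfolding koop_dom_def by auto
    have hpos: "hnorm ip h > 0"
      by (rule hnorm_pos[OF hH h(2)])
    have norm_s: "(\<lambda>n. hnorm ip (s n)) \<longlonglongrightarrow> hnorm ip h"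
      by (rule hnorm_tendsto[OF sH hH to_h])
    have "(\<lambda>n. ereal (hnorm ip (koop_shift F w (s n)) / hnorm ip (s n)))
        \<longlonglongrightarrow> ereal (hnorm ip (koop_shift F w h) / hnorm ip h)"
      using hnorm_koop_shift_tendsto[OF sD h(1) to_h to_Kh] norm_s hpos
      by (intro tendsto_ereal tendsto_divide) auto
    moreover have "eventually (\<lambda>n. sigma_inf ip S (koop_shift F w)
        \<le> ereal (hnorm ip (koop_shift F w (s n)) / hnorm ip (s n))) sequentially"
      using order_tendstoD(1)[OF norm_s hpos]
    proof (rule eventually_mono)
      fix n assume "hnorm ip (s n) > 0"
      then have "s n \<noteq> (\<lambda>y. 0)"
        using hnorm_zero by auto
      then show "sigma_inf ip S (koop_shift F w) \<le> ereal (hnorm ip (koop_shift F w (s n)) / hnorm ip (s n))"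
        by (rule sigma_inf_le[OF s])
    qed
    ultimately show "sigma_inf ip S (koop_shift F w) \<le> ereal (hnorm ip (koop_shift F w h) / hnorm ip h)"
      by (rule tendsto_lowerbound) simp
  qed
  show "sigma_inf ip (koop_dom H F) (koop_shift F w) \<le> sigma_inf ip S (koop_shift F w)"
    by (rule sigma_inf_antimono) (use core in \<open>simp add: is_core_def\<close>)
qed

lemma Gamma_hat_memI:
  assumes sN: "s \<in> Vspan kern xs N" and sD: "s \<in> koop_dom H F" and s0: "s \<noteq> (\<lambda>y. 0)"
    and g: "g \<in> Grid N"
    and small: "hnorm ip (koop_shift F w s) / hnorm ip s + cmod (g - w) + 1 / real N \<le> \<epsilon>"
  shows "g \<in> Gamma_hat ip kern xs F \<epsilon> N"
proof -
  have spos: "hnorm ip s > 0"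
    using hnorm_pos sD s0 unfolding koop_dom_def by blast
  have "hnorm ip (koop_shift F g s)
      \<le> (hnorm ip (koop_shift F w s) / hnorm ip s + cmod (g - w)) * hnorm ip s"
    using hnorm_koop_shift_le[OF sD, of g w] spos by (simp add: distrib_right)
  then have "hnorm ip (koop_shift F g s) / hnorm ip s
      \<le> hnorm ip (koop_shift F w s) / hnorm ip s + cmod (g - w)"
    by (subst pos_divide_le_eq[OF spos])
  then have "hnorm ip (koop_shift F g s) / hnorm ip s + 1 / real N \<le> \<epsilon>"
    using small by linarith
  moreover have "sigma_inf ip (Vspan kern xs N) (koop_shift F g) + ereal (1 / real N)
      \<le> ereal (hnorm ip (koop_shift F g s) / hnorm ip s) + ereal (1 / real N)"
    by (rule add_right_mono[OF sigma_inf_le[OF sN s0]])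
  ultimately show ?thesis
    unfolding Gamma_hat_def using g by (simp add: order_trans)
qed

lemma Gamma_hat_approaches:
  assumes core: "is_core ip (koop_dom H F) (\<lambda>g. g \<circ> F) (Vspan_all kern xs)"
    and w: "sigma_inf ip (koop_dom H F) (koop_shift F w) < ereal \<epsilon>" and "\<delta> > 0"
  shows "eventually (\<lambda>N. \<exists>g\<in>Gamma_hat ip kern xs F \<epsilon> N. dist w g < \<delta>) sequentially"
proof -
  have "sigma_inf ip (Vspan_all kern xs) (koop_shift F w) < ereal \<epsilon>"
    using w sigma_inf_koop_shift_core[OF core] by simp
  then obtain s where s: "s \<in> Vspan_all kern xs" and s0: "s \<noteq> (\<lambda>y. 0)"
    and r: "hnorm ip (koop_shift F w s) / hnorm ip s < \<epsilon>"
    unfolding sigma_inf_def Inf_less_iff by auto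
  then obtain M where sM: "s \<in> Vspan kern xs M"
    unfolding Vspan_all_def by blast
  define r where "r = hnorm ip (koop_shift F w s) / hnorm ip s"
  have sD: "s \<in> koop_dom H F"
    using core s unfolding is_core_def by blast
  have "eventually (\<lambda>N. M \<le> N \<and> cmod w + 2 \<le> real N \<and> 3 / real N < \<epsilon> - r \<and> 2 / real N < \<delta>) sequentially"
    using filterlim_real_sequentially r \<open>\<delta> > 0\<close> unfolding r_def filterlim_at_top
    by (intro eventually_conj eventually_ge_at_top order_tendstoD(2)[OF lim_const_over_n]) auto
  then show ?thesis
  proof (rule eventually_mono, elim conjE)
    fix N assume N: "M \<le> N" "cmod w + 2 \<le> real N" "3 / real N < \<epsilon> - r" "2 / real N < \<delta>"
    then have "N \<ge> 1"
      using norm_ge_zero[of w] by linarith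
    then obtain g where g: "g \<in> Grid N" "cmod (g - w) \<le> 2 / real N"
      using Grid_approx N(2) by blast
    have "g \<in> Gamma_hat ip kern xs F \<epsilon> N"
    proof (rule Gamma_hat_memI[OF _ sD s0 g(1)])
      show "s \<in> Vspan kern xs N"
        using Vspan_mono[OF N(1)] sM by blast
      show "hnorm ip (koop_shift F w s) / hnorm ip s + cmod (g - w) + 1 / real N \<le> \<epsilon>"
        using g(2) N(3) unfolding r_def by linarith
    qed
    moreover have "dist w g < \<delta>"
      using g(2) N(4) by (simp add: dist_norm norm_minus_commute)
    ultimately show "\<exists>g\<in>Gamma_hat ip kern xs F \<epsilon> N. dist w g < \<delta>"
      by blast
  qed
qed

end

theorem mainTheorem7:
  fixes H :: "('x \<Rightarrow> complex) set"
    and ip :: "('x \<Rightarrow> complex) \<Rightarrow> ('x \<Rightarrow> complex) \<Rightarrow> complex"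
    and kern :: "'x \<Rightarrow> 'x \<Rightarrow> complex"
    and F :: "'x \<Rightarrow> 'x"
    and xs :: "nat \<Rightarrow> 'x"
    and \<epsilon> :: real
  assumes rkhs: "is_RKHS H ip kern"
    and dense: "densely_defined H ip (koop_dom H F)"
    and core_K: "is_core ip (koop_dom H F) (\<lambda>g. g \<circ> F) (Vspan_all kern xs)"
    and core_Kadj: "is_core ip (koop_adj_dom H ip F) (koop_adj H ip F) (Vspan_all kern xs)"
    and eps: "\<epsilon> > 0"
  shows "(\<forall>N\<ge>1. Gamma_hat ip kern xs F \<epsilon> N \<subseteq> Sp_ap_eps H ip F \<epsilon>) \<and>
         attouch_wets (Gamma_hat ip kern xs F \<epsilon>) (Sp_ap_eps H ip F \<epsilon>)"
proof -
  have hs: "function_hilbert_space H ip"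
    using rkhs unfolding is_RKHS_def by blast
  have "Vspan_all kern xs \<subseteq> koop_dom H F"
    using core_K unfolding is_core_def by blast
  then have incl: "\<forall>N\<ge>1. Gamma_hat ip kern xs F \<epsilon> N \<subseteq> Sp_ap_eps H ip F \<epsilon>"
    using Gamma_hat_subset_Sp_ap_eps by blast
  have "attouch_wets (Gamma_hat ip kern xs F \<epsilon>) (Sp_ap_eps H ip F \<epsilon>)"
    unfolding Sp_ap_eps_def
  proof (rule attouch_wets_closure)
    show "eventually (\<lambda>N. Gamma_hat ip kern xs F \<epsilon> N
        \<subseteq> closure {z. sigma_inf ip (koop_dom H F) (koop_shift F z) < ereal \<epsilon>}) sequentially"
      using incl unfolding Sp_ap_eps_def eventually_sequentially by blast
  qed (auto intro: Gamma_hat_approaches[OF hs core_K])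
  with incl show ?thesis
    by blast
qed

end
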